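(* Let $n\ge3$, let $a_0,\dots,a_n$ be indeterminates, $P=\sum_{i=0}^na_ix^i$ and $\boldsymbol F=(P^{(0)},\dots,P^{(n)})$. For $\boldsymbol\mu=(\mu_1,\dots,\mu_m)\in\mathcal M(n)$ with conjugate $\bar{\boldsymbol\mu}$, let $G_0=P$ and $G_i=R_{(\bar\mu_1,\dots,\bar\mu_i)}(\boldsymbol F)$ for $i\ge1$, regarded as a polynomial in $x$ of formal degree $s_i=n-(\bar\mu_1+\cdots+\bar\mu_i)$, and let $\mathcal T_{\boldsymbol\mu}$ be the set of polynomials in $a_0,\dots,a_n$ consisting of all coefficients (in $x$) of $R_{\boldsymbol\gamma}(\boldsymbol F)$ for $\boldsymbol\gamma\in\mathcal M(n)$ with $\boldsymbol\gamma\succeq\bar{\boldsymbol\mu}$ lexicographically, together with $D_j(G_i)$ for $0\le i\le\mu_1-1$ and $1\le j\le\bar\mu_{i+1}$. Let $d_{\rm QXY}$ be the maximum of the total degrees in $a_0,\dots,a_n$ of the polynomials in $\bigcup_{\boldsymbol\mu\in\mathcal M(n)}\mathcal T_{\boldsymbol\mu}$. Then $d_{\rm QXY}=n(n-1)$.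
   Context: $P^{(k)}$ is the $k$-th derivative of $P$. $\mathcal M(n)$ is the set of nonincreasing tuples of positive integers with sum $n$; the conjugate of $\boldsymbol\mu$ is $\bar{\boldsymbol\mu}=(\bar\mu_1,\bar\mu_2,\dots)$ with $\bar\mu_i=\#\{j:\mu_j\ge i\}$; tuples are compared lexicographically after padding with zeros. Subresultants: for $\boldsymbol F=(F_0,\dots,F_t)$, $d_i=\deg F_i$, and $\boldsymbol\delta\in\mathbb{Z}_{\ge0}^t$ with $|\boldsymbol\delta|=\sum\delta_i\le d_0$, put $\delta_0=\max_{\delta_i\neq0,\,i\ge1}(d_i+\delta_i)-d_0$ if this max is $\ge d_0$, else $\delta_0=1$; $\boldsymbol M_{\boldsymbol\delta}(\boldsymbol F)$ is the $(\delta_0+|\boldsymbol\delta|)\times(\delta_0+d_0)$ matrix with rows the coefficient vectors of $x^{\delta_0-1}F_0,\dots,F_0,x^{\delta_1-1}F_1,\dots,F_1,\dots,x^{\delta_t-1}F_t,\dots,F_t$ w.r.t. $x^{\delta_0+d_0-1},\dots,1$; $R_{\boldsymbol\delta}(\boldsymbol F)=\operatorname{dp}\boldsymbol M_{\boldsymbol\delta}(\boldsymbol F)$, where for a $p\times q$ matrix ($p\le q$) $\operatorname{dp}\boldsymbol M=\sum_{i=0}^{q-p}\det[\boldsymbol M_1,\dots,\boldsymbol M_{p-1},\boldsymbol M_{q-i}]x^i$. For $\boldsymbol\delta$ of length $t\le n$, $R_{\boldsymbol\delta}(\boldsymbol F)=R_{\boldsymbol\delta}(P^{(0)},\dots,P^{(t)})$.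 Discriminant sequence: for $G=\sum_{i=0}^s b_ix^i$ (formal degree $s$), the discrimination matrix is the $2s\times2s$ matrix whose rows $2k-1$, $2k$ ($k=1,\dots,s$) are the coefficient vectors of $x^{s-k}G$ and $x^{s-k}G'$ w.r.t. $x^{2s-1},\dots,1$; $D_j(G)$ is its leading principal $2j\times2j$ minor. *)

theory Defs
  imports "HOL-Computational_Algebra.Polynomial" "HOL-Library.Poly_Mapping"
          "Jordan_Normal_Form.Determinant"
begin

text \<open>Multivariate polynomials over the integers in the indeterminates a_0, a_1, ...
  (variable i is a_i); a monomial is a finitely supported exponent vector.\<close>
type_synonym mpoly = "(nat \<Rightarrow>\<^sub>0 nat) \<Rightarrow>\<^sub>0 int"

definition var_a :: "nat \<Rightarrow> mpoly" where
  "var_a i = Poly_Mapping.single (Poly_Mapping.single i 1) 1"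

text \<open>Total degree (the zero polynomial is given total degree 0).\<close>
definition total_degree :: "mpoly \<Rightarrow> nat" where
  "total_degree p = Max (insert 0 ((\<lambda>m. \<Sum>v\<in>Poly_Mapping.keys m. Poly_Mapping.lookup m v) ` Poly_Mapping.keys p))"

definition genP :: "nat \<Rightarrow> mpoly poly" where
  "genP n = (\<Sum>i\<le>n. monom (var_a i) i)"

definition nderiv :: "nat \<Rightarrow> 'a::{comm_semiring_1,semiring_no_zero_divisors} poly \<Rightarrow> 'a poly" where
  "nderiv k p = (pderiv ^^ k) p"

definition partitions :: "nat \<Rightarrow> nat list set" where
  "partitions n = {mu. sorted_wrt (\<ge>) mu \<and> (\<forall>x\<in>set mu. 0 < x) \<and> sum_list mu = n}"

definition conjugate :: "nat list \<Rightarrow> nat list" where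
  "conjugate mu = map (\<lambda>i. length (filter (\<lambda>m. i \<le> m) mu)) [1..<Max (insert 0 (set mu)) + 1]"

definition pad :: "nat \<Rightarrow> nat list \<Rightarrow> nat list" where
  "pad N xs = xs @ replicate (N - length xs) 0"

definition lex_ge :: "nat list \<Rightarrow> nat list \<Rightarrow> bool" where
  "lex_ge xs ys = (let N = max (length xs) (length ys); xs' = pad N xs; ys' = pad N ys in
     xs' = ys' \<or> (\<exists>k<N. take k xs' = take k ys' \<and> xs' ! k > ys' ! k))"

text \<open>dp of a p x q matrix (p \<le> q): sum_{i=0}^{q-p} det[M_1,...,M_{p-1},M_{q-i}] x^i,
  where M_j is the j-th column (1-based).\<close>
definition dp :: "'a::comm_ring_1 mat \<Rightarrow> 'a poly" where
  "dp M = (let p = dim_row M; q = dim_col M in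
     (\<Sum>i\<le>q - p. monom (det (mat p p (\<lambda>(r, c).
        if c < p - 1 then M $$ (r, c) else M $$ (r, q - i - 1)))) i))"

text \<open>Row vector of the coefficients of x^e * f with respect to x^(N-1), ..., x, 1.\<close>
definition coeff_row :: "nat \<Rightarrow> nat \<Rightarrow> 'a::zero poly \<Rightarrow> nat \<Rightarrow> 'a" where
  "coeff_row N e f c = (let k = N - 1 - c in if e \<le> k then coeff f (k - e) else 0)"

text \<open>Subresultant R_delta(F) for F = (F_0,...,F_t) (list Fs of length t+1) and
  delta = (delta_1,...,delta_t) (list ds of length t).\<close>
definition delta0 :: "'a::zero poly list \<Rightarrow> nat list \<Rightarrow> nat" where
  "delta0 Fs ds = (let d = (\<lambda>i. degree (Fs ! i));
      S = {d (i+1) + ds ! i | i. i < length ds \<and> ds ! i \<noteq> 0} in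
     if S \<noteq> {} \<and> Max S \<ge> d 0 then Max S - d 0 else 1)"

text \<open>Rows in order: x^(delta_0-1) F_0, ..., F_0, x^(delta_1-1) F_1, ..., F_1, ...;
  as a list of (polynomial index, shift exponent).\<close>
definition row_list :: "nat \<Rightarrow> nat list \<Rightarrow> (nat \<times> nat) list" where
  "row_list dz ds = map (\<lambda>e. (0, e)) (rev [0..<dz]) @
     concat (map (\<lambda>i. map (\<lambda>e. (i + 1, e)) (rev [0..<ds ! i])) [0..<length ds])"

definition subres_matrix :: "'a::zero poly list \<Rightarrow> nat list \<Rightarrow> 'a mat" where
  "subres_matrix Fs ds = (let dz = delta0 Fs ds; rows = row_list dz ds;
      N = dz + degree (Fs ! 0) in
     mat (length rows) N (\<lambda>(r, c). coeff_row N (snd (rows ! r)) (Fs ! fst (rows ! r)) c))"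

definition subres :: "'a::comm_ring_1 poly list \<Rightarrow> nat list \<Rightarrow> 'a poly" where
  "subres Fs ds = dp (subres_matrix Fs ds)"

text \<open>R_delta(F) for F = (P^(0),...,P^(n)): uses (P^(0),...,P^(t)), t = length delta.\<close>
definition R_F :: "nat \<Rightarrow> nat list \<Rightarrow> mpoly poly" where
  "R_F n ds = subres (map (\<lambda>i. nderiv i (genP n)) [0..<length ds + 1]) ds"

text \<open>Discrimination matrix of G regarded with formal degree s (2s x 2s); rows 2k-1, 2k
  (k = 1..s) are coefficients of x^(s-k) G and x^(s-k) G' w.r.t. x^(2s-1),...,1.\<close>
definition discr_matrix :: "nat \<Rightarrow> 'a::{comm_semiring_1,semiring_no_zero_divisors} poly \<Rightarrow> 'a mat" where
  "discr_matrix s G = mat (2*s) (2*s) (\<lambda>(r, c).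
     let k = r div 2 + 1 in
     if even r then coeff_row (2*s) (s - k) G c else coeff_row (2*s) (s - k) (pderiv G) c)"

definition Dj :: "nat \<Rightarrow> nat \<Rightarrow> 'a::{comm_ring_1,semiring_no_zero_divisors} poly \<Rightarrow> 'a" where
  "Dj s j G = det (mat (2*j) (2*j) (\<lambda>(r, c). discr_matrix s G $$ (r, c)))"

definition G_mu :: "nat \<Rightarrow> nat list \<Rightarrow> nat \<Rightarrow> mpoly poly" where
  "G_mu n mu i = (if i = 0 then genP n else R_F n (take i (conjugate mu)))"

definition s_mu :: "nat \<Rightarrow> nat list \<Rightarrow> nat \<Rightarrow> nat" where
  "s_mu n mu i = n - sum_list (take i (conjugate mu))"

definition T_mu :: "nat \<Rightarrow> nat list \<Rightarrow> mpoly set" where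
  "T_mu n mu =
     {coeff (R_F n gamma) k | gamma k. gamma \<in> partitions n \<and> lex_ge gamma (conjugate mu)
                                     \<and> k \<le> degree (R_F n gamma)}
   \<union> {Dj (s_mu n mu i) j (G_mu n mu i) | i j. i \<le> hd mu - 1 \<and> 1 \<le> j \<and> j \<le> conjugate mu ! i}"

definition d_QXY :: "nat \<Rightarrow> nat" where
  "d_QXY n = Max (total_degree ` (\<Union>mu\<in>partitions n. T_mu n mu))"

end

theory Submission
  imports Defs
begin

text \<open>The entries of the matrices M_gamma(F) are coefficients of derivatives of P, hence linear
  forms in a_0, ..., a_n. So the coefficients of R_gamma(F) are homogeneous of degree
  delta_0 + |gamma|, and D_j(G_i), a determinant of size 2j in the coefficients of G_i, is
  homogeneous of degree 2j(delta_0 + mubar_1 + ... + mubar_i). The bounds delta_0 \<le> mubar_1 - 1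
  (or delta_0 = 1) and j \<le> mubar_(i+1) \<le> n - (mubar_1 + ... + mubar_i) put all these degrees
  below n(n - 1), since 2j(2(n - j) - 1) \<le> n(n - 1).

  Equality is attained for mu = (2, ..., 2, 1) (the 1 only for odd n), whose conjugate is (a, b)
  with a = n - n div 2 and b = n div 2: D_b(R_(a)(P, P')) has degree 2b(2a - 1) = n(n - 1). It is
  nonzero because at P = x^n + n x^b - a we have n P - x P' = n a (x^b - 1); row operations then
  turn M_(a)(P, P') into a staircase matrix, so R_(a)(P, P') specialises to a nonzero multiple of
  x^b - 1, and D_b(x^b - 1) \<noteq> 0.\<close>

section \<open>Homogeneous polynomials\<close>

definition monomial_degree :: "('v \<Rightarrow>\<^sub>0 nat) \<Rightarrow> nat" where
  "monomial_degree m = (\<Sum>v\<in>Poly_Mapping.keys m. Poly_Mapping.lookup m v)"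

lemma monomial_degree_add: "monomial_degree (m + m') = monomial_degree m + monomial_degree m'"
  unfolding monomial_degree_def by (rule setsum_keys_plus_distrib) auto

definition homogeneous :: "nat \<Rightarrow> (('v \<Rightarrow>\<^sub>0 nat) \<Rightarrow>\<^sub>0 'a::zero) \<Rightarrow> bool" where
  "homogeneous d p \<longleftrightarrow> (\<forall>m\<in>Poly_Mapping.keys p. monomial_degree m = d)"

lemma homogeneous_zero [simp]: "homogeneous d 0"
  by (simp add: homogeneous_def)

lemma homogeneous_add:
  "homogeneous d p \<Longrightarrow> homogeneous d q \<Longrightarrow> homogeneous d (p + q)"
  unfolding homogeneous_def using keys_add[of p q] by blast

lemma homogeneous_uminus: "homogeneous d p \<Longrightarrow> homogeneous d (- p)"
  by (simp add: homogeneous_def)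

lemma homogeneous_mult:
  fixes p q :: "('v \<Rightarrow>\<^sub>0 nat) \<Rightarrow>\<^sub>0 'a::comm_semiring_0"
  shows "homogeneous d p \<Longrightarrow> homogeneous e q \<Longrightarrow> homogeneous (d + e) (p * q)"
  unfolding homogeneous_def using keys_mult[of p q] by (force simp: monomial_degree_add)

lemma homogeneous_sum:
  "(\<And>i. i \<in> I \<Longrightarrow> homogeneous d (f i)) \<Longrightarrow> homogeneous d (\<Sum>i\<in>I. f i)"
  by (induction I rule: infinite_finite_induct) (auto intro: homogeneous_add)

lemma homogeneous_prod:
  fixes f :: "'i \<Rightarrow> ('v \<Rightarrow>\<^sub>0 nat) \<Rightarrow>\<^sub>0 'a::comm_semiring_1"
  assumes "finite I" "\<And>i. i \<in> I \<Longrightarrow> homogeneous d (f i)"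
  shows "homogeneous (card I * d) (\<Prod>i\<in>I. f i)"
  using assms
proof (induction I rule: finite_induct)
  case empty
  then show ?case by (simp add: homogeneous_def monomial_degree_def)
next
  case (insert x F)
  then show ?case using homogeneous_mult[of d "f x" "card F * d"] by simp
qed

lemma homogeneous_of_int: "homogeneous 0 (of_int k :: ('v \<Rightarrow>\<^sub>0 nat) \<Rightarrow>\<^sub>0 'a::ring_1)"
  by (simp add: homogeneous_def monomial_degree_def flip: single_of_int)

lemma homogeneous_var_a: "homogeneous 1 (var_a i)"
  by (simp add: homogeneous_def var_a_def monomial_degree_def)

lemma homogeneous_det:
  fixes A :: "(('v \<Rightarrow>\<^sub>0 nat) \<Rightarrow>\<^sub>0 'a::comm_ring_1) mat"
  assumes A: "A \<in> carrier_mat k k" and hom: "\<And>i j. i < k \<Longrightarrow> j < k \<Longrightarrow> homogeneous d (A $$ (i, j))"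
  shows "homogeneous (k * d) (det A)"
  unfolding det_def'[OF A]
proof (rule homogeneous_sum)
  fix p assume "p \<in> {p. p permutes {0..<k}}"
  then have "homogeneous (card {0..<k} * d) (\<Prod>i = 0..<k. A $$ (i, p i))"
    by (intro homogeneous_prod hom) (auto dest: permutes_in_image)
  then show "homogeneous (k * d) (signof p * (\<Prod>i = 0..<k. A $$ (i, p i)))"
    by (simp add: sign_def homogeneous_uminus)
qed

lemma total_degree_le_if_homogeneous: "homogeneous d p \<Longrightarrow> total_degree p \<le> d"
  unfolding total_degree_def homogeneous_def monomial_degree_def[symmetric]
  by (auto intro!: Max.boundedI)

lemma total_degree_eq_if_homogeneous:
  assumes hom: "homogeneous d p" and "p \<noteq> 0"
  shows "total_degree p = d"
proof -
  obtain m where "m \<in> Poly_Mapping.keys p"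
    using \<open>p \<noteq> 0\<close> by (metis keys_eq_empty all_not_in_conv)
  then have "d \<le> total_degree p"
    using hom unfolding total_degree_def monomial_degree_def[symmetric] homogeneous_def
    by (intro Max_ge_iff[THEN iffD2]) auto
  with total_degree_le_if_homogeneous[OF hom] show ?thesis by simp
qed

definition homogeneous_coeffs :: "nat \<Rightarrow> (('v \<Rightarrow>\<^sub>0 nat) \<Rightarrow>\<^sub>0 'a::zero) poly \<Rightarrow> bool" where
  "homogeneous_coeffs d f \<longleftrightarrow> (\<forall>j. homogeneous d (coeff f j))"

lemma homogeneous_coeffs_pderiv:
  fixes f :: "(('v::linorder \<Rightarrow>\<^sub>0 nat) \<Rightarrow>\<^sub>0 'a::idom) poly"
  shows "homogeneous_coeffs d f \<Longrightarrow> homogeneous_coeffs d (pderiv f)"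
  unfolding homogeneous_coeffs_def coeff_pderiv
  using homogeneous_mult[OF homogeneous_of_int] by (metis add_0 of_int_of_nat_eq)

lemma homogeneous_coeffs_monom_mult:
  fixes f :: "(('v \<Rightarrow>\<^sub>0 nat) \<Rightarrow>\<^sub>0 'a::comm_semiring_1) poly"
  shows "homogeneous_coeffs d f \<Longrightarrow> homogeneous_coeffs d (monom 1 e * f)"
  by (simp add: homogeneous_coeffs_def coeff_monom_mult)

lemma coeff_genP: "coeff (genP n) j = (if j \<le> n then var_a j else 0)"
  unfolding genP_def by (simp add: coeff_sum)

lemma var_a_neq_zero: "var_a i \<noteq> 0"
  unfolding var_a_def by (metis lookup_single_eq lookup_zero zero_neq_one)

lemma degree_genP: "degree (genP n) = n"
  by (rule antisym) (auto intro: degree_le le_degree simp: coeff_genP var_a_neq_zero)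

lemma homogeneous_coeffs_genP: "homogeneous_coeffs 1 (genP n)"
  unfolding homogeneous_coeffs_def coeff_genP using homogeneous_var_a by simp

lemma nderiv_0 [simp]: "nderiv 0 p = p"
  by (simp add: nderiv_def)

lemma nderiv_Suc: "nderiv (Suc i) p = pderiv (nderiv i p)"
  by (simp add: nderiv_def)

lemma homogeneous_coeffs_nderiv_genP: "homogeneous_coeffs 1 (nderiv i (genP n))"
  by (induction i)
    (simp_all only: nderiv_0 nderiv_Suc homogeneous_coeffs_genP homogeneous_coeffs_pderiv)

lemma degree_nderiv:
  "degree (nderiv i p) = degree p - i"
  for p :: "'a::{comm_semiring_1,semiring_no_zero_divisors,semiring_char_0} poly"
  by (induction i) (simp_all add: nderiv_Suc degree_pderiv)

abbreviation derivs_genP :: "nat \<Rightarrow> nat \<Rightarrow> mpoly poly list" where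
  "derivs_genP n t \<equiv> map (\<lambda>i. nderiv i (genP n)) [0..<t + 1]"

text \<open>Stated for [0..<Suc t], the simp normal form of the list in derivs_genP n t.\<close>

lemma nth_derivs_genP:
  "i \<le> t \<Longrightarrow> map (\<lambda>i. nderiv i (genP n)) [0..<Suc t] ! i = nderiv i (genP n)"
  by (simp del: upt_Suc)

definition coeff_rows_mat :: "nat \<Rightarrow> nat \<Rightarrow> (nat \<Rightarrow> 'a::zero poly) \<Rightarrow> 'a mat" where
  "coeff_rows_mat p N fs = mat p N (\<lambda>(r, c). coeff (fs r) (N - 1 - c))"

lemma coeff_rows_mat_carrier [simp]: "coeff_rows_mat p N fs \<in> carrier_mat p N"
  and dim_row_coeff_rows_mat [simp]: "dim_row (coeff_rows_mat p N fs) = p"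
  and dim_col_coeff_rows_mat [simp]: "dim_col (coeff_rows_mat p N fs) = N"
  by (simp_all add: coeff_rows_mat_def)

lemma index_coeff_rows_mat [simp]:
  "r < p \<Longrightarrow> c < N \<Longrightarrow> coeff_rows_mat p N fs $$ (r, c) = coeff (fs r) (N - 1 - c)"
  by (simp add: coeff_rows_mat_def)

lemma coeff_rows_mat_cong:
  "(\<And>r. r < p \<Longrightarrow> fs r = gs r) \<Longrightarrow> coeff_rows_mat p N fs = coeff_rows_mat p N gs"
  unfolding coeff_rows_mat_def by (intro cong_mat) auto

lemma coeff_row_eq_coeff_monom_mult:
  "coeff_row N e f c = coeff (monom 1 e * f) (N - 1 - c)" for f :: "'a::comm_semiring_1 poly"
  by (simp add: coeff_row_def coeff_monom_mult Let_def)

lemma subres_matrix_eq_coeff_rows_mat: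
  "subres_matrix Fs ds = (let dz = delta0 Fs ds; rows = row_list dz ds in
     coeff_rows_mat (length rows) (dz + degree (Fs ! 0))
       (\<lambda>r. monom 1 (snd (rows ! r)) * Fs ! fst (rows ! r)))"
  for Fs :: "'a::comm_semiring_1 poly list"
  unfolding subres_matrix_def coeff_rows_mat_def Let_def
  by (intro cong_mat) (simp_all add: coeff_row_eq_coeff_monom_mult)

lemma discr_matrix_eq_coeff_rows_mat:
  "discr_matrix s G = coeff_rows_mat (2 * s) (2 * s)
     (\<lambda>r. monom 1 (s - (r div 2 + 1)) * (if even r then G else pderiv G))"
  for G :: "'a::{comm_semiring_1,semiring_no_zero_divisors} poly"
  unfolding discr_matrix_def coeff_rows_mat_def
  by (intro cong_mat) (simp_all add: Let_def coeff_row_eq_coeff_monom_mult)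

lemma map_mat_coeff_rows_mat:
  "h 0 = 0 \<Longrightarrow> map_mat h (coeff_rows_mat p N fs) = coeff_rows_mat p N (\<lambda>r. map_poly h (fs r))"
  by (intro eq_matI) (simp_all add: coeff_map_poly)

lemma mult_coeff_rows_mat:
  fixes E :: "'a::comm_semiring_1 mat"
  assumes "E \<in> carrier_mat m p"
  shows "E * coeff_rows_mat p N fs = coeff_rows_mat m N (\<lambda>t. \<Sum>r<p. smult (E $$ (t, r)) (fs r))"
  using assms by (intro eq_matI) (auto simp: scalar_prod_def coeff_sum lessThan_atLeast0)

lemma coeff_rows_mat_below_diag:
  assumes "\<And>r. r < p \<Longrightarrow> degree (fs r) \<le> N - 1 - r" "p \<le> N" "c < r" "r < p"
  shows "coeff_rows_mat p N fs $$ (r, c) = 0"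
  using assms(1)[of r] assms(2-) by (simp add: coeff_eq_0)

lemma det_coeff_rows_mat_staircase:
  assumes "\<And>r. r < N \<Longrightarrow> degree (fs r) \<le> N - 1 - r"
  shows "det (coeff_rows_mat N N fs) = (\<Prod>r<N. coeff (fs r) (N - 1 - r))"
proof -
  have "upper_triangular (coeff_rows_mat N N fs)"
    using coeff_rows_mat_below_diag[OF assms] by (auto simp: upper_triangular_def)
  then have "det (coeff_rows_mat N N fs) = (\<Prod>r<N. coeff_rows_mat N N fs $$ (r, r))"
    by (simp add: det_upper_triangular[OF _ coeff_rows_mat_carrier] prod_list_diag_prod
        atLeast0LessThan)
  also have "\<dots> = (\<Prod>r<N. coeff (fs r) (N - 1 - r))"
    by (rule prod.cong) simp_all
  finally show ?thesis .
qed

lemma coeff_dp: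
  "coeff (dp M) i = (if i \<le> dim_col M - dim_row M then
     det (mat (dim_row M) (dim_row M) (\<lambda>(r, c).
       if c < dim_row M - 1 then M $$ (r, c) else M $$ (r, dim_col M - i - 1))) else 0)"
  unfolding dp_def Let_def by (simp add: coeff_sum)

lemma dp_coeff_rows_mat_staircase:
  fixes fs :: "nat \<Rightarrow> 'a::comm_ring_1 poly"
  assumes deg: "\<And>r. r < p \<Longrightarrow> degree (fs r) \<le> N - 1 - r" and "0 < p" "p \<le> N"
  shows "dp (coeff_rows_mat p N fs) = smult (\<Prod>r<p - 1. coeff (fs r) (N - 1 - r)) (fs (p - 1))"
proof (rule poly_eqI)
  fix i
  let ?M = "coeff_rows_mat p N fs"
  show "coeff (dp ?M) i = coeff (smult (\<Prod>r<p - 1. coeff (fs r) (N - 1 - r)) (fs (p - 1))) i"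
  proof (cases "i \<le> N - p")
    case True
    define A where "A = mat p p (\<lambda>(r, c). if c < p - 1 then ?M $$ (r, c) else ?M $$ (r, N - i - 1))"
    have A: "A \<in> carrier_mat p p" by (simp add: A_def)
    have diag: "A $$ (r, r) = (if r < p - 1 then coeff (fs r) (N - 1 - r) else coeff (fs r) i)"
      if "r < p" for r
      using that True \<open>p \<le> N\<close> by (simp add: A_def)
    have "upper_triangular A"
    proof (rule upper_triangularI)
      fix r c assume "c < r" "r < dim_row A"
      then show "A $$ (r, c) = 0"
        using coeff_rows_mat_below_diag[OF deg \<open>p \<le> N\<close>, of c r] by (simp add: A_def)
    qed
    then have "det A = (\<Prod>r<p. A $$ (r, r))"
      using A by (simp add: det_upper_triangular[OF _ A] prod_list_diag_prod atLeast0LessThan)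
    also have "\<dots> = (\<Prod>r<p - 1. A $$ (r, r)) * A $$ (p - 1, p - 1)"
      using \<open>0 < p\<close> prod.lessThan_Suc[of _ "p - 1"] by simp
    also have "\<dots> = (\<Prod>r<p - 1. coeff (fs r) (N - 1 - r)) * coeff (fs (p - 1)) i"
      using \<open>0 < p\<close> diag by simp
    finally have "det A = (\<Prod>r<p - 1. coeff (fs r) (N - 1 - r)) * coeff (fs (p - 1)) i" .
    moreover have "coeff (dp ?M) i = det A"
      using True unfolding coeff_dp dim_row_coeff_rows_mat dim_col_coeff_rows_mat A_def by simp
    ultimately show ?thesis by simp
  next
    case False
    then have "coeff (fs (p - 1)) i = 0"
      using deg[of "p - 1"] \<open>0 < p\<close> by (intro coeff_eq_0) linarith
    with False show ?thesis by (simp add: coeff_dp)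
  qed
qed

lemma dp_mult:
  fixes E :: "'a::comm_ring_1 mat"
  assumes E: "E \<in> carrier_mat p p" and M: "M \<in> carrier_mat p q" and "p \<le> q"
  shows "dp (E * M) = smult (det E) (dp M)"
proof (rule poly_eqI)
  fix i
  have dims: "dim_row (E * M) = p" "dim_col (E * M) = q" "dim_row M = p" "dim_col M = q"
    using E M by auto
  show "coeff (dp (E * M)) i = coeff (smult (det E) (dp M)) i"
  proof (cases "i \<le> q - p")
    case True
    let ?A = "mat p p (\<lambda>(r, c). if c < p - 1 then M $$ (r, c) else M $$ (r, q - i - 1))"
    have "mat p p (\<lambda>(r, c). if c < p - 1 then (E * M) $$ (r, c) else (E * M) $$ (r, q - i - 1))
        = E * ?A"
      using True E M \<open>p \<le> q\<close> by (intro eq_matI) (auto simp: scalar_prod_def intro!: sum.cong)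
    then show ?thesis
      using True det_mult[OF E, of ?A] unfolding coeff_smult coeff_dp dims by simp
  qed (unfold coeff_smult coeff_dp dims, simp)
qed

lemma homogeneous_coeffs_dp:
  fixes M :: "(('v \<Rightarrow>\<^sub>0 nat) \<Rightarrow>\<^sub>0 'a::comm_ring_1) mat"
  assumes "dim_row M \<le> dim_col M"
    and "\<And>r c. r < dim_row M \<Longrightarrow> c < dim_col M \<Longrightarrow> homogeneous d (M $$ (r, c))"
  shows "homogeneous_coeffs (dim_row M * d) (dp M)"
  using assms unfolding homogeneous_coeffs_def coeff_dp by (auto intro!: homogeneous_det)

lemma Dj_smult: "j \<le> s \<Longrightarrow> Dj s j (smult k G) = k ^ (2 * j) * Dj s j G"
proof -
  assume "j \<le> s"
  then have "mat (2 * j) (2 * j) (\<lambda>(r, c). discr_matrix s (smult k G) $$ (r, c))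
      = k \<cdot>\<^sub>m mat (2 * j) (2 * j) (\<lambda>(r, c). discr_matrix s G $$ (r, c))"
    by (intro eq_matI) (auto simp: discr_matrix_def Let_def coeff_row_def pderiv_smult)
  then show ?thesis unfolding Dj_def by simp
qed

context comm_ring_hom
begin

lemma map_poly_dp: "dim_row M \<le> dim_col M \<Longrightarrow> map_poly hom (dp M) = dp (mat\<^sub>h M)"
  by (rule poly_eqI)
    (auto simp: coeff_map_poly coeff_dp simp flip: hom_det intro!: arg_cong[where f = det])

end

context idom_hom
begin

lemma map_poly_pderiv: "map_poly hom (pderiv f) = pderiv (map_poly hom f)"
  by (rule poly_eqI) (simp add: coeff_pderiv coeff_map_poly hom_mult hom_of_nat del: of_nat_Suc)

lemma hom_Dj: "j \<le> s \<Longrightarrow> hom (Dj s j G) = Dj s j (map_poly hom G)"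
proof -
  assume "j \<le> s"
  then have "mat\<^sub>h (mat (2 * j) (2 * j) (\<lambda>(r, c). discr_matrix s G $$ (r, c)))
      = mat (2 * j) (2 * j) (\<lambda>(r, c). discr_matrix s (map_poly hom G) $$ (r, c))"
    by (intro eq_matI)
      (auto simp: discr_matrix_def Let_def coeff_row_def coeff_map_poly simp flip: map_poly_pderiv)
  then show ?thesis unfolding Dj_def by (metis hom_det)
qed

end

section \<open>Homogeneity of the polynomials in T_mu\<close>

lemma length_row_list: "length (row_list dz ds) = dz + sum_list ds"
proof -
  have "sum_list (map ((!) ds) [0..<length ds]) = sum_list ds"
    by (simp add: map_nth)
  then show ?thesis
    unfolding row_list_def by (simp add: length_concat comp_def)
qed

lemma fst_row_list_le: "x \<in> set (row_list dz ds) \<Longrightarrow> fst x \<le> length ds"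
  unfolding row_list_def by auto

lemma homogeneous_coeffs_subres:
  fixes Fs :: "(('v \<Rightarrow>\<^sub>0 nat) \<Rightarrow>\<^sub>0 'a::comm_ring_1) poly list"
  assumes hom: "\<And>k. k \<le> length ds \<Longrightarrow> homogeneous_coeffs d (Fs ! k)"
    and "sum_list ds \<le> degree (Fs ! 0)"
  shows "homogeneous_coeffs ((delta0 Fs ds + sum_list ds) * d) (subres Fs ds)"
proof -
  define rows where "rows = row_list (delta0 Fs ds) ds"
  define M where "M = coeff_rows_mat (length rows) (delta0 Fs ds + degree (Fs ! 0))
    (\<lambda>r. monom 1 (snd (rows ! r)) * Fs ! fst (rows ! r))"
  have "subres Fs ds = dp M"
    unfolding subres_def M_def rows_def subres_matrix_eq_coeff_rows_mat Let_def ..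
  moreover have "homogeneous_coeffs (dim_row M * d) (dp M)"
  proof (rule homogeneous_coeffs_dp)
    show "dim_row M \<le> dim_col M"
      using assms(2) by (simp add: M_def rows_def length_row_list)
    fix r c assume "r < dim_row M" "c < dim_col M"
    moreover from \<open>r < dim_row M\<close> have "fst (rows ! r) \<le> length ds"
      using fst_row_list_le[OF nth_mem] unfolding M_def rows_def by simp
    ultimately show "homogeneous d (M $$ (r, c))"
      using homogeneous_coeffs_monom_mult[OF hom] by (simp add: M_def homogeneous_coeffs_def)
  qed
  ultimately show ?thesis
    by (simp add: M_def rows_def length_row_list)
qed

lemma homogeneous_coeffs_R_F:
  "sum_list ds \<le> n \<Longrightarrow>
    homogeneous_coeffs (delta0 (derivs_genP n (length ds)) ds + sum_list ds) (R_F n ds)"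
  unfolding R_F_def
  using homogeneous_coeffs_subres[of ds 1 "derivs_genP n (length ds)"]
    nth_derivs_genP homogeneous_coeffs_nderiv_genP degree_genP
  by (simp del: upt_Suc)

lemma homogeneous_Dj:
  fixes G :: "(('v::linorder \<Rightarrow>\<^sub>0 nat) \<Rightarrow>\<^sub>0 'a::idom) poly"
  assumes "homogeneous_coeffs d G" "j \<le> s"
  shows "homogeneous (2 * j * d) (Dj s j G)"
  unfolding Dj_def discr_matrix_eq_coeff_rows_mat
proof (rule homogeneous_det)
  fix r c assume "r < 2 * j" "c < 2 * j"
  have "homogeneous_coeffs d (monom 1 e * (if even r then G else pderiv G))" for e
    using assms(1) by (simp add: homogeneous_coeffs_monom_mult homogeneous_coeffs_pderiv)
  with assms \<open>r < 2 * j\<close> \<open>c < 2 * j\<close> show "homogeneous d (mat (2 * j) (2 * j)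
    (\<lambda>(r, c). coeff_rows_mat (2 * s) (2 * s) (\<lambda>r. monom 1 (s - (r div 2 + 1)) *
       (if even r then G else pderiv G)) $$ (r, c)) $$ (r, c))"
    by (simp add: homogeneous_coeffs_def)
qed simp

lemma delta0_derivs_genP_le:
  assumes le_B: "\<And>x. x \<in> set ds \<Longrightarrow> x \<le> B" and "1 \<le> n"
  shows "delta0 (derivs_genP n (length ds)) ds \<le> max 1 (B - 1)"
proof -
  define S where "S = {degree (derivs_genP n (length ds) ! (i + 1)) + ds ! i
    | i. i < length ds \<and> ds ! i \<noteq> 0}"
  have "x \<le> n - 1 + B" if "x \<in> S" for x
  proof -
    obtain i where "i < length ds" "x = degree (derivs_genP n (length ds) ! (i + 1)) + ds ! i"
      using \<open>x \<in> S\<close> by (auto simp: S_def)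
    moreover have "ds ! i \<le> B"
      using le_B nth_mem \<open>i < length ds\<close> by blast
    ultimately show ?thesis
      by (simp add: nth_derivs_genP degree_nderiv degree_genP del: upt_Suc)
  qed
  then have "S \<noteq> {} \<Longrightarrow> Max S \<le> n - 1 + B"
    by (simp add: S_def)
  with \<open>1 \<le> n\<close> show ?thesis
    unfolding delta0_def Let_def S_def[symmetric]
    by (simp add: nth_derivs_genP degree_genP del: upt_Suc) linarith
qed

lemma delta0_derivs_genP_single:
  assumes "1 \<le> a" "1 \<le> n"
  shows "delta0 (derivs_genP n 1) [a] = a - 1"
proof -
  have "{degree (derivs_genP n 1 ! (i + 1)) + [a] ! i | i. i < length [a] \<and> [a] ! i \<noteq> 0}
      = {n - 1 + a}"
    using assms by (auto simp: degree_nderiv degree_genP simp del: upt_Suc)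
  with assms show ?thesis
    unfolding delta0_def Let_def by (simp add: degree_genP)
qed

lemma partitions_le: "mu \<in> partitions n \<Longrightarrow> x \<in> set mu \<Longrightarrow> x \<le> n"
  unfolding partitions_def using member_le_sum_list by blast

lemma length_partition_le: "mu \<in> partitions n \<Longrightarrow> length mu \<le> n"
proof -
  have "length xs \<le> sum_list xs" if "\<And>x. x \<in> set xs \<Longrightarrow> 0 < x" for xs :: "nat list"
    using that by (induction xs) force+
  then show "mu \<in> partitions n \<Longrightarrow> length mu \<le> n"
    unfolding partitions_def by auto
qed

lemma finite_partitions: "finite (partitions n)"
proof (rule finite_subset)
  show "partitions n \<subseteq> {xs. set xs \<subseteq> {..n} \<and> length xs \<le> n}"
    using partitions_le length_partition_le by blast
qed (rule finite_lists_length_le, simp)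

lemma length_conjugate_partition:
  assumes "mu \<in> partitions n" "1 \<le> n"
  shows "length (conjugate mu) = hd mu" "0 < hd mu"
proof -
  obtain x xs where mu: "mu = x # xs"
    using assms by (cases mu) (auto simp: partitions_def)
  with assms(1) have "\<forall>y\<in>set xs. y \<le> x" "0 < x"
    by (auto simp: partitions_def)
  with mu have "Max (insert 0 (set mu)) = x"
    by (intro Max_eqI) auto
  with mu \<open>0 < x\<close> show "length (conjugate mu) = hd mu" "0 < hd mu"
    by (simp_all add: conjugate_def)
qed

lemma nth_conjugate:
  "l < length (conjugate mu) \<Longrightarrow> conjugate mu ! l = length (filter (\<lambda>m. Suc l \<le> m) mu)"
  by (simp add: conjugate_def del: upt_Suc)

lemma nth_conjugate_le_length: "l < length (conjugate mu) \<Longrightarrow> conjugate mu ! l \<le> length mu"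
  by (simp add: nth_conjugate)

lemma length_filter_mono: "(\<And>x. P x \<Longrightarrow> Q x) \<Longrightarrow> length (filter P xs) \<le> length (filter Q xs)"
  by (induction xs) auto

lemma sorted_conjugate: "sorted_wrt (\<ge>) (conjugate mu)"
  unfolding conjugate_def sorted_wrt_map
  by (rule sorted_wrt_mono_rel[OF _ sorted_wrt_upt])
    (auto intro: length_filter_mono simp del: upt_Suc)

lemma nth_conjugate_le_nth_conjugate_0:
  "l < length (conjugate mu) \<Longrightarrow> conjugate mu ! l \<le> conjugate mu ! 0"
  using sorted_wrt_nth_less[OF sorted_conjugate, of 0 l mu] by (cases l) auto

lemma sum_list_eq_sum_length_filter:
  fixes xs :: "nat list"
  assumes "\<And>x. x \<in> set xs \<Longrightarrow> x \<le> M"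
  shows "sum_list xs = (\<Sum>i = 1..M. length (filter (\<lambda>m. i \<le> m) xs))"
  using assms
proof (induction xs)
  case (Cons x xs)
  have "{1..M} \<inter> {i. i \<le> x} = {1..x}"
    using Cons.prems[of x] by auto
  then have "(\<Sum>i = 1..M. of_bool (i \<le> x)) = x"
    by simp
  moreover have "length (filter (\<lambda>m. i \<le> m) (x # xs))
      = of_bool (i \<le> x) + length (filter (\<lambda>m. i \<le> m) xs)"
    for i by simp
  ultimately have "(\<Sum>i = 1..M. length (filter (\<lambda>m. i \<le> m) (x # xs)))
      = x + (\<Sum>i = 1..M. length (filter (\<lambda>m. i \<le> m) xs))"
    by (simp only: sum.distrib)
  with Cons show ?case by simp
qed simp

lemma sum_list_conjugate: "sum_list (conjugate mu) = sum_list mu"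
proof -
  let ?M = "Max (insert 0 (set mu))"
  have "sum_list (conjugate mu) = (\<Sum>i = 1..?M. length (filter (\<lambda>m. i \<le> m) mu))"
    unfolding conjugate_def
    by (simp add: atLeastLessThanSuc_atLeastAtMost del: upt_Suc flip: sum_set_upt_conv_sum_list_nat)
  also have "\<dots> = sum_list mu"
    by (rule sum_list_eq_sum_length_filter[symmetric]) simp
  finally show ?thesis .
qed

lemma sum_list_take_conjugate_le: "mu \<in> partitions n \<Longrightarrow> sum_list (take L (conjugate mu)) \<le> n"
  using sum_list_conjugate[of mu]
    sum_list_append[of "take L (conjugate mu)" "drop L (conjugate mu)"]
  by (simp add: partitions_def)

section \<open>The upper bound\<close>

lemma two_n_le_n_mult_pred: "3 \<le> n \<Longrightarrow> 2 * n \<le> n * (n - 1)" for n :: nat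
  using mult_le_mono2[of 2 "n - 1" n] by (simp add: mult.commute)

lemma two_mult_le_n_mult_pred:
  fixes n j d S :: nat
  assumes "3 \<le> n" "1 \<le> j" "S + j \<le> n" and d: "d + 1 \<le> S \<or> (j = 1 \<and> d \<le> 1)"
  shows "2 * j * (d + S) \<le> n * (n - 1)"
proof (cases "d + 1 \<le> S")
  case True
  \<comment> \<open>n(n - 1) - 2j(2(n - j) - 1) = (n - 2j)(n - 2j - 1) is a product of consecutive integers\<close>
  have "0 \<le> (int n - 2 * int j) * (int n - 2 * int j - 1)"
    by (cases "int n - 2 * int j \<le> 0") (auto intro: mult_nonpos_nonpos)
  then have "2 * int j * (2 * (int n - int j) - 1) \<le> int n * (int n - 1)"
    by (simp add: algebra_simps)
  moreover have "int (2 * j * (2 * (n - j) - 1)) = 2 * int j * (2 * (int n - int j) - 1)"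
    using True assms by simp
  moreover have "int (n * (n - 1)) = int n * (int n - 1)"
    using assms by simp
  ultimately have "2 * j * (2 * (n - j) - 1) \<le> n * (n - 1)"
    by linarith
  moreover have "d + S \<le> 2 * (n - j) - 1"
    using True assms by linarith
  ultimately show ?thesis
    by (meson le_trans mult_le_mono2)
next
  case False
  with d have "2 * j * (d + S) \<le> 2 * n"
    using assms by simp
  with two_n_le_n_mult_pred[OF \<open>3 \<le> n\<close>] show ?thesis by linarith
qed

lemma total_degree_coeff_R_F_le:
  assumes "3 \<le> n" "gamma \<in> partitions n"
  shows "total_degree (coeff (R_F n gamma) k) \<le> n * (n - 1)"
proof -
  have "delta0 (derivs_genP n (length gamma)) gamma \<le> max 1 (n - 1)"
    using assms by (intro delta0_derivs_genP_le) (auto intro: partitions_le)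
  then have "delta0 (derivs_genP n (length gamma)) gamma \<le> n - 1"
    using assms(1) by simp
  moreover have "sum_list gamma = n"
    using assms(2) by (simp add: partitions_def)
  moreover have "total_degree (coeff (R_F n gamma) k)
      \<le> delta0 (derivs_genP n (length gamma)) gamma + sum_list gamma"
    using homogeneous_coeffs_R_F[of gamma n] \<open>sum_list gamma = n\<close>
    by (intro total_degree_le_if_homogeneous) (simp add: homogeneous_coeffs_def)
  ultimately show ?thesis
    using two_n_le_n_mult_pred[OF assms(1)] by linarith
qed

lemma total_degree_Dj_genP_le:
  assumes "3 \<le> n" "j \<le> n"
  shows "total_degree (Dj n j (genP n)) \<le> n * (n - 1)"
proof -
  have "total_degree (Dj n j (genP n)) \<le> 2 * j * 1"
    using assms(2) by (intro total_degree_le_if_homogeneous homogeneous_Dj homogeneous_coeffs_genP)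
  with assms show ?thesis
    using two_n_le_n_mult_pred[OF assms(1)] by linarith
qed

lemma total_degree_Dj_R_F_take_conjugate_le:
  assumes n: "3 \<le> n" and mu: "mu \<in> partitions n"
    and i: "0 < i" "i < length (conjugate mu)" and j: "1 \<le> j" "j \<le> conjugate mu ! i"
  defines "ds \<equiv> take i (conjugate mu)"
  shows "total_degree (Dj (n - sum_list ds) j (R_F n ds)) \<le> n * (n - 1)"
proof -
  let ?c = "conjugate mu"
  define S where "S = sum_list ds"
  define d where "d = delta0 (derivs_genP n (length ds)) ds"
  have "S + ?c ! i \<le> n"
    using sum_list_take_conjugate_le[OF mu, of "Suc i"] i
    by (simp add: S_def ds_def take_Suc_conv_app_nth)
  have "?c ! 0 \<in> set ds"
    using i by (auto simp: ds_def in_set_conv_nth intro!: exI[of _ 0])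
  then have "?c ! 0 \<le> S"
    by (simp add: S_def member_le_sum_list)
  have "x \<le> ?c ! 0" if "x \<in> set ds" for x
    using that nth_conjugate_le_nth_conjugate_0 by (auto simp: ds_def in_set_conv_nth)
  then have "d \<le> max 1 (?c ! 0 - 1)"
    unfolding d_def using n by (intro delta0_derivs_genP_le) auto
  moreover have "?c ! i \<le> ?c ! 0"
    using nth_conjugate_le_nth_conjugate_0[OF i(2)] .
  ultimately have "d + 1 \<le> S \<or> (j = 1 \<and> d \<le> 1)"
    using \<open>?c ! 0 \<le> S\<close> j by linarith
  with \<open>S + ?c ! i \<le> n\<close> j have "2 * j * (d + S) \<le> n * (n - 1)"
    by (intro two_mult_le_n_mult_pred[OF n j(1)]) simp_all
  moreover have "homogeneous_coeffs (d + S) (R_F n ds)"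
    using homogeneous_coeffs_R_F[of ds n] \<open>S + ?c ! i \<le> n\<close> by (simp add: d_def S_def)
  then have "homogeneous (2 * j * (d + S)) (Dj (n - S) j (R_F n ds))"
    using \<open>S + ?c ! i \<le> n\<close> j by (intro homogeneous_Dj) simp_all
  ultimately show ?thesis
    using total_degree_le_if_homogeneous by (fastforce simp: S_def)
qed

lemma total_degree_Dj_G_mu_le:
  assumes n: "3 \<le> n" and mu: "mu \<in> partitions n"
    and i: "i \<le> hd mu - 1" and j: "1 \<le> j" "j \<le> conjugate mu ! i"
  shows "total_degree (Dj (s_mu n mu i) j (G_mu n mu i)) \<le> n * (n - 1)"
proof (cases "i = 0")
  case True
  have "0 < length (conjugate mu)"
    using length_conjugate_partition[OF mu] n by linarith
  then have "j \<le> n"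
    using j True nth_conjugate_le_length length_partition_le[OF mu] by fastforce
  with True show ?thesis
    using total_degree_Dj_genP_le[OF n] by (simp add: G_mu_def s_mu_def)
next
  case False
  have "i < length (conjugate mu)"
    using i length_conjugate_partition[OF mu] n by linarith
  with False show ?thesis
    using total_degree_Dj_R_F_take_conjugate_le[OF n mu _ _ j] by (simp add: G_mu_def s_mu_def)
qed

lemma total_degree_T_mu_le:
  "3 \<le> n \<Longrightarrow> mu \<in> partitions n \<Longrightarrow> p \<in> T_mu n mu \<Longrightarrow> total_degree p \<le> n * (n - 1)"
  unfolding T_mu_def using total_degree_coeff_R_F_le total_degree_Dj_G_mu_le by blast

lemma finite_T_mu: "finite (T_mu n mu)"
proof -
  have "T_mu n mu \<subseteq> (\<Union>gamma\<in>partitions n. (\<lambda>k. coeff (R_F n gamma) k) ` {..degree (R_F n gamma)})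
      \<union> (\<Union>i\<le>hd mu - 1. (\<lambda>j. Dj (s_mu n mu i) j (G_mu n mu i)) ` {..conjugate mu ! i})"
    unfolding T_mu_def by blast
  then show ?thesis
    by (rule finite_subset) (use finite_partitions in auto)
qed

definition eval_monomial :: "('v \<Rightarrow> 'a::comm_semiring_1) \<Rightarrow> ('v \<Rightarrow>\<^sub>0 nat) \<Rightarrow> 'a" where
  "eval_monomial c m = (\<Prod>v\<in>Poly_Mapping.keys m. c v ^ Poly_Mapping.lookup m v)"

lemma eval_monomial_superset:
  "finite K \<Longrightarrow> Poly_Mapping.keys m \<subseteq> K \<Longrightarrow>
    eval_monomial c m = (\<Prod>v\<in>K. c v ^ Poly_Mapping.lookup m v)"
  unfolding eval_monomial_def by (rule prod.mono_neutral_left) (auto simp: in_keys_iff)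

lemma eval_monomial_add: "eval_monomial c (m + m') = eval_monomial c m * eval_monomial c m'"
proof -
  let ?K = "Poly_Mapping.keys m \<union> Poly_Mapping.keys m'"
  have "eval_monomial c (m + m') = (\<Prod>v\<in>?K. c v ^ Poly_Mapping.lookup (m + m') v)"
    using keys_add[of m m'] by (intro eval_monomial_superset) auto
  also have "\<dots> = (\<Prod>v\<in>?K. c v ^ Poly_Mapping.lookup m v) * (\<Prod>v\<in>?K. c v ^ Poly_Mapping.lookup m' v)"
    by (simp add: lookup_add power_add prod.distrib)
  also have "\<dots> = eval_monomial c m * eval_monomial c m'"
    by (subst (1 2) eval_monomial_superset[of ?K]) auto
  finally show ?thesis .
qed

definition eval_mpoly :: "('v \<Rightarrow> 'a::comm_semiring_1) \<Rightarrow> (('v \<Rightarrow>\<^sub>0 nat) \<Rightarrow>\<^sub>0 'a) \<Rightarrow> 'a" where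
  "eval_mpoly c p = (\<Sum>m\<in>Poly_Mapping.keys p. Poly_Mapping.lookup p m * eval_monomial c m)"

lemma eval_mpoly_zero [simp]: "eval_mpoly c 0 = 0"
  by (simp add: eval_mpoly_def)

lemma eval_mpoly_add: "eval_mpoly c (p + q) = eval_mpoly c p + eval_mpoly c q"
  unfolding eval_mpoly_def by (rule setsum_keys_plus_distrib) (simp_all add: distrib_right)

lemma eval_mpoly_single: "eval_mpoly c (Poly_Mapping.single m a) = a * eval_monomial c m"
  by (simp add: eval_mpoly_def)

lemma eval_mpoly_sum: "eval_mpoly c (\<Sum>i\<in>I. f i) = (\<Sum>i\<in>I. eval_mpoly c (f i))"
  by (induction I rule: infinite_finite_induct) (auto simp: eval_mpoly_add)

lemma sum_single_lookup:
  "(\<Sum>m\<in>Poly_Mapping.keys p. Poly_Mapping.single m (Poly_Mapping.lookup p m)) = p"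
  by (rule poly_mapping_eqI) (auto simp: lookup_sum lookup_single when_def in_keys_iff)

lemma eval_mpoly_mult: "eval_mpoly c (p * q) = eval_mpoly c p * eval_mpoly c q"
proof -
  let ?P = "Poly_Mapping.keys p" and ?Q = "Poly_Mapping.keys q"
  have "p * q = (\<Sum>m\<in>?P. \<Sum>m'\<in>?Q.
      Poly_Mapping.single (m + m') (Poly_Mapping.lookup p m * Poly_Mapping.lookup q m'))"
    by (subst (1) sum_single_lookup[symmetric, of p], subst (1) sum_single_lookup[symmetric, of q])
      (simp add: sum_product mult_single)
  then have "eval_mpoly c (p * q) = (\<Sum>m\<in>?P. \<Sum>m'\<in>?Q.
      Poly_Mapping.lookup p m * Poly_Mapping.lookup q m' * eval_monomial c (m + m'))"
    by (simp add: eval_mpoly_sum eval_mpoly_single)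
  also have "\<dots> = eval_mpoly c p * eval_mpoly c q"
    by (simp add: eval_mpoly_def eval_monomial_add sum_product algebra_simps)
  finally show ?thesis .
qed

lemma eval_mpoly_one: "eval_mpoly c 1 = 1"
  using eval_mpoly_single[of c 0 1] by (simp add: eval_monomial_def)

interpretation eval_mpoly: idom_hom "eval_mpoly c" for c :: "'v::linorder \<Rightarrow> 'a::idom"
  by unfold_locales (simp_all add: eval_mpoly_add eval_mpoly_mult eval_mpoly_one)

lemma eval_mpoly_var_a: "eval_mpoly c (var_a i) = c i"
  by (simp add: var_a_def eval_mpoly_single eval_monomial_def)

lemma map_poly_eval_mpoly_genP:
  "degree p \<le> n \<Longrightarrow> map_poly (eval_mpoly (coeff p)) (genP n) = p"
  by (rule poly_eqI) (auto simp: coeff_map_poly coeff_genP eval_mpoly_var_a coeff_eq_0)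

section \<open>The discriminant of x^b - 1\<close>

lemma sum_smult_if_eq:
  "k < p \<Longrightarrow> (\<Sum>r<p. smult (if r = k then c else 0) (f r)) = smult c (f k)" for p :: nat
proof -
  assume "k < p"
  have "(\<Sum>r<p. smult (if r = k then c else 0) (f r)) = (\<Sum>r<p. if r = k then smult c (f k) else 0)"
    by (rule sum.cong) auto
  with \<open>k < p\<close> show ?thesis by simp
qed

lemma Dj_eq_det_discr_matrix: "Dj s s G = det (discr_matrix s G)"
  unfolding Dj_def discr_matrix_def by (rule arg_cong[where f = det]) auto

lemma degree_monom_mult_le: "degree (monom 1 e * f) \<le> e + degree f"
  for f :: "'a::comm_semiring_1 poly"
  using degree_mult_le[of "monom 1 e" f] degree_monom_le[of "1::'a" e] by linarith

context
  fixes b :: nat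
  assumes b: "1 \<le> b"
begin

text \<open>Row operations on the discrimination matrix of G = x^b - 1, whose rows are x^k G and
  x^k G' for k < b: keep the rows x^k G and the row G', and for 1 \<le> k < b replace x^(b-k) G' by
  b x^(b-1-k) G - x^(b-k) G' = - b x^(b-1-k). Row t then has degree 2b - 1 - t.\<close>

definition discr_row_coeff :: "nat \<Rightarrow> nat \<Rightarrow> 'a::comm_ring_1" where
  "discr_row_coeff t r =
     (if t < b then (if r = 2 * t then 1 else 0)
      else if t = b then (if r = 2 * b - 1 then 1 else 0)
      else (if r = 2 * (t - b) then of_nat b else 0) + (if r = 2 * (t - b) - 1 then - 1 else 0))"

definition discr_reduced_rows :: "nat \<Rightarrow> 'a::comm_ring_1 poly" where
  "discr_reduced_rows t = (if t < b then monom 1 (b - 1 - t) * (monom 1 b - 1)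
     else monom (if t = b then of_nat b else - of_nat b) (2 * b - 1 - t))"

lemma discr_row_coeff_rows:
  fixes G :: "'a::idom poly"
  defines "G \<equiv> monom 1 b - 1"
  defines "fs \<equiv> \<lambda>r. monom 1 (b - (r div 2 + 1)) * (if even r then G else pderiv G)"
  assumes t: "t < 2 * b"
  shows "(\<Sum>r<2 * b. smult (discr_row_coeff t r) (fs r)) = discr_reduced_rows t"
proof -
  have pderiv_G: "pderiv G = monom (of_nat b) (b - 1)"
    by (simp add: G_def pderiv_diff pderiv_monom)
  consider "t < b" | "t = b" | "b < t" by linarith
  then show ?thesis
  proof cases
    case 1
    then show ?thesis
      using t sum_smult_if_eq[of "2 * t" "2 * b" 1 fs]
      by (simp add: discr_row_coeff_def discr_reduced_rows_def fs_def G_def)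
  next
    case 2
    moreover have "(2 * b - 1) div 2 = b - 1" "odd (2 * b - 1)"
      using b by simp_all
    ultimately show ?thesis
      using b t sum_smult_if_eq[of "2 * b - 1" "2 * b" 1 fs]
      by (simp add: discr_row_coeff_def discr_reduced_rows_def fs_def pderiv_G)
  next
    case 3
    define k where "k = t - b"
    have k: "1 \<le> k" "k < b" "t = b + k"
      using 3 t by (simp_all add: k_def)
    have "(\<Sum>r<2 * b. smult (discr_row_coeff t r) (fs r))
        = (\<Sum>r<2 * b. smult (if r = 2 * k then of_nat b else 0) (fs r))
        + (\<Sum>r<2 * b. smult (if r = 2 * k - 1 then - 1 else 0) (fs r))"
      using k t by (simp add: discr_row_coeff_def smult_add_left sum.distrib)
    also have "\<dots> = smult (of_nat b) (fs (2 * k)) - fs (2 * k - 1)"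
      using k by (simp add: sum_smult_if_eq)
    also have "\<dots> = monom (- of_nat b) (b - 1 - k)"
    proof -
      have "(2 * k - 1) div 2 = k - 1" "odd (2 * k - 1)"
        using k by simp_all
      then have "fs (2 * k - 1) = monom 1 (b - k) * monom (of_nat b) (b - 1)"
        using k by (simp add: fs_def pderiv_G)
      moreover have "fs (2 * k) = monom 1 (b - (k + 1)) * G"
        by (simp add: fs_def)
      moreover have "b - (k + 1) + b = b - k + (b - 1)"
        using k by linarith
      ultimately show ?thesis
        using k by (simp add: G_def mult_monom smult_monom right_diff_distrib smult_diff_right
            flip: minus_monom)
    qed
    finally show ?thesis
      using k by (simp add: discr_reduced_rows_def)
  qed
qed

lemma Dj_monom_minus_one_neq_zero: "Dj b b (monom 1 b - 1 :: 'a::{idom,ring_char_0} poly) \<noteq> 0"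
proof -
  let ?G = "monom 1 b - 1 :: 'a poly"
  let ?E = "mat (2 * b) (2 * b) (\<lambda>(t, r). discr_row_coeff t r) :: 'a mat"
  have "degree ?G \<le> b"
    by (intro degree_diff_le) (simp_all add: degree_monom_le)
  then have deg: "degree (discr_reduced_rows t :: 'a poly) \<le> 2 * b - 1 - t" if "t < 2 * b" for t
    using that degree_monom_mult_le[of "b - 1 - t" ?G] degree_monom_le
    by (auto simp: discr_reduced_rows_def intro: order_trans)
  have "?E * discr_matrix b ?G
      = coeff_rows_mat (2 * b) (2 * b) (\<lambda>t. \<Sum>r<2 * b. smult (?E $$ (t, r))
          (monom 1 (b - (r div 2 + 1)) * (if even r then ?G else pderiv ?G)))"
    unfolding discr_matrix_eq_coeff_rows_mat by (rule mult_coeff_rows_mat) simp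
  also have "\<dots> = coeff_rows_mat (2 * b) (2 * b) discr_reduced_rows"
  proof (rule coeff_rows_mat_cong)
    fix t assume "t < 2 * b"
    then show "(\<Sum>r<2 * b. smult (?E $$ (t, r))
        (monom 1 (b - (r div 2 + 1)) * (if even r then ?G else pderiv ?G))) = discr_reduced_rows t"
      by (subst discr_row_coeff_rows[symmetric]) (auto intro: sum.cong)
  qed
  finally have "det ?E * Dj b b ?G = (\<Prod>t<2 * b. coeff (discr_reduced_rows t) (2 * b - 1 - t))"
    using det_mult[of ?E "2 * b" "discr_matrix b ?G"] det_coeff_rows_mat_staircase[OF deg]
    by (simp add: Dj_eq_det_discr_matrix discr_matrix_def)
  also have "\<dots> \<noteq> 0"
    using b by (auto simp: discr_reduced_rows_def coeff_monom_mult)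
  finally show ?thesis
    by simp
qed

end

section \<open>A polynomial of T_mu of total degree n(n - 1)\<close>

lemma degree_coeff_monom_mult:
  fixes f :: "'a::comm_semiring_1 poly"
  assumes "degree f \<le> d"
  shows "degree (monom 1 e * f) \<le> e + d" "coeff (monom 1 e * f) (e + d) = coeff f d"
  using assms degree_monom_mult_le[of e f] by (simp_all add: coeff_monom_mult)

lemma (in comm_ring_hom) map_poly_monom_mult:
  "map_poly hom (monom 1 e * f) = monom 1 e * map_poly hom f"
  by (rule poly_eqI) (simp add: coeff_map_poly coeff_monom_mult)

lemma row_list_single_nth:
  "r < dz + a \<Longrightarrow> row_list dz [a] ! r = (if r < dz then (0, dz - 1 - r) else (1, dz + a - 1 - r))"
  by (auto simp: row_list_def nth_append rev_nth)

lemma subres_matrix_single: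
  fixes F0 F1 :: "'a::comm_semiring_1 poly" and a :: nat
  defines "dz \<equiv> delta0 [F0, F1] [a]"
  shows "subres_matrix [F0, F1] [a] = coeff_rows_mat (dz + a) (dz + degree F0)
    (\<lambda>r. if r < dz then monom 1 (dz - 1 - r) * F0 else monom 1 (dz + a - 1 - r) * F1)"
proof -
  have "length (row_list dz [a]) = dz + a"
    by (simp add: length_row_list)
  then show ?thesis
    unfolding subres_matrix_eq_coeff_rows_mat Let_def dz_def[symmetric]
    by (auto intro!: coeff_rows_mat_cong simp: row_list_single_nth)
qed

context
  fixes n a b :: nat
  assumes a: "2 \<le> a" and b: "1 \<le> b" and n: "a + b = n"
begin

definition witness_P :: "int poly" where
  "witness_P = monom 1 n + monom (of_nat n) b - monom (of_nat a) 0"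

lemma degree_witness_P: "degree witness_P \<le> n"
  using n unfolding witness_P_def
  by (intro degree_diff_le degree_add_le) (auto intro: order_trans[OF degree_monom_le])

lemma pderiv_witness_P:
  "pderiv witness_P = monom (of_nat n) (n - 1) + monom (of_nat (n * b)) (b - 1)"
  by (simp add: witness_P_def pderiv_add pderiv_diff pderiv_monom)

lemma witness_P_identity:
  "smult (of_nat n) witness_P - monom 1 1 * pderiv witness_P
    = smult (of_nat (n * a)) (monom 1 b - 1)"
proof -
  have "n - 1 + 1 = n" "b - 1 + 1 = b"
    using a b n by simp_all
  then have xP': "monom 1 1 * pderiv witness_P = monom (of_nat n) n + monom (of_nat (n * b)) b"
    by (simp add: pderiv_witness_P distrib_left mult_monom)
  have nP: "smult (of_nat n) witness_P
      = monom (of_nat n) n + monom (of_nat (n * n)) b - monom (of_nat (n * a)) 0"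
    by (simp add: witness_P_def smult_add_right smult_diff_right smult_monom)
  have "of_nat (n * n) - of_nat (n * b) = (of_nat (n * a) :: int)"
    unfolding n[symmetric] by (simp add: algebra_simps)
  then have "monom (of_nat (n * n)) b - monom (of_nat (n * b)) b - monom (of_nat (n * a)) 0
      = smult (of_nat (n * a)) (monom 1 b - 1 :: int poly)"
    by (simp add: diff_monom smult_diff_right smult_monom monom_0 flip: one_pCons)
  then show ?thesis
    unfolding xP' nP by (simp add: algebra_simps)
qed

definition witness_rows :: "nat \<Rightarrow> int poly" where
  "witness_rows r = (if r < a - 1 then monom 1 (a - 2 - r) * witness_P
     else monom 1 (2 * a - 2 - r) * pderiv witness_P)"

lemma map_mat_subres_matrix_witness:
  "map_mat (eval_mpoly (coeff witness_P)) (subres_matrix (derivs_genP n 1) [a])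
    = coeff_rows_mat (2 * a - 1) (a - 1 + n) witness_rows"
proof -
  have derivs: "derivs_genP n 1 = [genP n, pderiv (genP n)]"
    by (simp add: nderiv_def)
  have "delta0 [genP n, pderiv (genP n)] [a] = a - 1"
    using delta0_derivs_genP_single[of a n] a n unfolding derivs by simp
  moreover have "map_poly (eval_mpoly (coeff witness_P)) (genP n) = witness_P"
    by (rule map_poly_eval_mpoly_genP[OF degree_witness_P])
  moreover have "a - 1 + a = 2 * a - 1" "a - 1 - 1 = a - 2" "a - 1 + a - 1 = 2 * a - 2"
    using a by simp_all
  ultimately show ?thesis
    unfolding derivs subres_matrix_single
    by (auto simp: map_mat_coeff_rows_mat degree_genP witness_rows_def
        eval_mpoly.map_poly_monom_mult eval_mpoly.map_poly_pderiv intro!: coeff_rows_mat_cong)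
qed

text \<open>Row operations on M_(a)(P, P'), whose rows are x^k P (the first a - 1) and x^k P' (the
  last a): put the rows of P' first and replace x^k P by n x^k P - x^(k+1) P' = n a x^k (x^b - 1).
  Row t then has degree a + n - 2 - t.\<close>

definition witness_row_coeff :: "nat \<Rightarrow> nat \<Rightarrow> int" where
  "witness_row_coeff t r =
     (if t < a then (if r = a - 1 + t then 1 else 0)
      else (if r = t - a then of_nat n else 0) + (if r = t - 1 then - 1 else 0))"

definition witness_reduced_rows :: "nat \<Rightarrow> int poly" where
  "witness_reduced_rows t = (if t < a then monom 1 (a - 1 - t) * pderiv witness_P
     else monom 1 (2 * a - 2 - t) * smult (of_nat (n * a)) (monom 1 b - 1))"

lemma witness_row_coeff_rows:
  assumes "t < 2 * a - 1"
  shows "(\<Sum>r<2 * a - 1. smult (witness_row_coeff t r) (witness_rows r)) = witness_reduced_rows t"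
proof (cases "t < a")
  case True
  then have "2 * a - 2 - (a - 1 + t) = a - 1 - t" "a - 1 + t < 2 * a - 1" "\<not> a - 1 + t < a - 1"
    by linarith+
  with True show ?thesis
    by (simp add: witness_row_coeff_def sum_smult_if_eq witness_rows_def witness_reduced_rows_def)
next
  case False
  define k where "k = 2 * a - 2 - t"
  have k: "t - a < 2 * a - 1" "t - 1 < 2 * a - 1"
    "a - 2 - (t - a) = k" "2 * a - 2 - (t - 1) = k + 1"
    "t - a < a - 1" "\<not> t - 1 < a - 1"
    using assms False by (simp_all add: k_def)
  have "monom 1 (k + 1) = monom 1 k * (monom 1 1 :: int poly)"
    by (simp add: mult_monom)
  with False k have "(\<Sum>r<2 * a - 1. smult (if r = t - a then of_nat n else 0) (witness_rows r)
      + smult (if r = t - 1 then - 1 else 0) (witness_rows r))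
      = monom 1 k * (smult (of_nat n) witness_P - monom 1 1 * pderiv witness_P)"
    by (simp add: sum.distrib sum_smult_if_eq witness_rows_def right_diff_distrib mult.assoc)
  with False show ?thesis
    unfolding witness_P_identity
    by (simp add: witness_row_coeff_def smult_add_left witness_reduced_rows_def k_def)
qed

lemma witness_reduced_rows_staircase:
  assumes "t < 2 * a - 1"
  shows "degree (witness_reduced_rows t) \<le> a - 1 + n - 1 - t \<and>
    coeff (witness_reduced_rows t) (a - 1 + n - 1 - t)
      = (if t < a then of_nat n else of_nat (n * a))"
proof -
  have deg_P': "degree (pderiv witness_P) \<le> n - 1"
    and coeff_P': "coeff (pderiv witness_P) (n - 1) = of_nat n"
    using a b n by (auto simp: pderiv_witness_P intro!: degree_add_le
        intro: order_trans[OF degree_monom_le])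
  let ?Q = "smult (of_nat (n * a)) (monom 1 b - 1) :: int poly"
  have deg_Q: "degree ?Q \<le> b" and coeff_Q: "coeff ?Q b = of_nat (n * a)"
    using b by (auto intro!: degree_diff_le order_trans[OF degree_smult_le] simp: degree_monom_le)
  show ?thesis
  proof (cases "t < a")
    case True
    then have "witness_reduced_rows t = monom 1 (a - 1 - t) * pderiv witness_P"
      and "a - 1 + n - 1 - t = (a - 1 - t) + (n - 1)"
      using n by (simp_all add: witness_reduced_rows_def)
    with True show ?thesis
      using degree_coeff_monom_mult[OF deg_P', of "a - 1 - t"] coeff_P' by simp
  next
    case False
    then have "witness_reduced_rows t = monom 1 (2 * a - 2 - t) * ?Q"
      and "a - 1 + n - 1 - t = (2 * a - 2 - t) + b"
      using assms n by (simp_all add: witness_reduced_rows_def)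
    with False b show ?thesis
      using degree_coeff_monom_mult[OF deg_Q, of "2 * a - 2 - t"] coeff_Q by simp
  qed
qed

lemma dp_witness_reduced_rows:
  "dp (coeff_rows_mat (2 * a - 1) (a - 1 + n) witness_reduced_rows)
    = smult (of_nat n ^ a * of_nat (n * a) ^ (a - 2)) (smult (of_nat (n * a)) (monom 1 b - 1))"
proof -
  have "\<not> 2 * a - 2 < a"
    using a by linarith
  have "dp (coeff_rows_mat (2 * a - 1) (a - 1 + n) witness_reduced_rows)
      = smult (\<Prod>t<2 * a - 2. coeff (witness_reduced_rows t) (a - 1 + n - 1 - t))
          (witness_reduced_rows (2 * a - 2))"
    using dp_coeff_rows_mat_staircase[OF witness_reduced_rows_staircase[THEN conjunct1],
        of "2 * a - 1"] a n
    by (simp add: numeral_2_eq_2)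
  also have "(\<Prod>t<2 * a - 2. coeff (witness_reduced_rows t) (a - 1 + n - 1 - t))
      = (\<Prod>t<2 * a - 2. if t < a then of_nat n else of_nat (n * a))"
    by (rule prod.cong, simp, rule witness_reduced_rows_staircase[THEN conjunct2]) simp
  also have "\<dots> = of_nat n ^ a * of_nat (n * a) ^ (a - 2)"
  proof -
    have "{..<2 * a - 2} \<inter> {t. t < a} = {..<a}" "{..<2 * a - 2} \<inter> - {t. t < a} = {a..<2 * a - 2}"
      using a by auto
    then show ?thesis
      using a by (simp add: prod.If_cases)
  qed
  also have "witness_reduced_rows (2 * a - 2) = smult (of_nat (n * a)) (monom 1 b - 1)"
    using \<open>\<not> 2 * a - 2 < a\<close> by (simp add: witness_reduced_rows_def)
  finally show ?thesis .
qed

lemma map_poly_eval_R_F_witness: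
  "map_poly (eval_mpoly (coeff witness_P)) (R_F n [a])
    = dp (coeff_rows_mat (2 * a - 1) (a - 1 + n) witness_rows)"
proof -
  let ?M = "subres_matrix (derivs_genP n 1) [a]"
  have dims: "dim_row ?M = 2 * a - 1" "dim_col ?M = a - 1 + n"
    using arg_cong[OF map_mat_subres_matrix_witness, of dim_row]
      arg_cong[OF map_mat_subres_matrix_witness, of dim_col] by simp_all
  have "R_F n [a] = dp ?M"
    by (simp add: R_F_def subres_def)
  moreover have "map_poly (eval_mpoly (coeff witness_P)) (dp ?M)
      = dp (map_mat (eval_mpoly (coeff witness_P)) ?M)"
    using n by (intro eval_mpoly.map_poly_dp) (simp only: dims)
  ultimately show ?thesis
    unfolding map_mat_subres_matrix_witness by simp
qed

lemma Dj_R_F_witness_neq_zero: "Dj b b (R_F n [a]) \<noteq> 0"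
proof -
  let ?ev = "eval_mpoly (coeff witness_P)"
  let ?E = "mat (2 * a - 1) (2 * a - 1) (\<lambda>(t, r). witness_row_coeff t r)"
  let ?M = "coeff_rows_mat (2 * a - 1) (a - 1 + n) witness_rows"
  define C :: int where "C = of_nat n ^ a * of_nat (n * a) ^ (a - 2) * of_nat (n * a)"
  have "?E * ?M = coeff_rows_mat (2 * a - 1) (a - 1 + n)
      (\<lambda>t. \<Sum>r<2 * a - 1. smult (?E $$ (t, r)) (witness_rows r))"
    by (rule mult_coeff_rows_mat) simp
  also have "\<dots> = coeff_rows_mat (2 * a - 1) (a - 1 + n) witness_reduced_rows"
  proof (rule coeff_rows_mat_cong)
    fix t assume "t < 2 * a - 1"
    then show "(\<Sum>r<2 * a - 1. smult (?E $$ (t, r)) (witness_rows r)) = witness_reduced_rows t"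
      by (subst witness_row_coeff_rows[symmetric]) (auto intro: sum.cong)
  qed
  finally have "smult (det ?E) (map_poly ?ev (R_F n [a])) = smult C (monom 1 b - 1)"
    using dp_mult[of ?E "2 * a - 1" ?M "a - 1 + n"] dp_witness_reduced_rows a n
    by (simp add: map_poly_eval_R_F_witness C_def)
  then have "det ?E ^ (2 * b) * Dj b b (map_poly ?ev (R_F n [a]))
      = C ^ (2 * b) * Dj b b (monom 1 b - 1)"
    by (metis Dj_smult order_refl)
  moreover have "C \<noteq> 0"
    using a n by (simp add: C_def)
  ultimately have "Dj b b (map_poly ?ev (R_F n [a])) \<noteq> 0"
    using Dj_monom_minus_one_neq_zero[OF b] by auto
  then have "?ev (Dj b b (R_F n [a])) \<noteq> 0"
    by (simp add: eval_mpoly.hom_Dj)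
  then show ?thesis
    by (rule contrapos_nn) simp
qed

lemma total_degree_Dj_R_F_witness: "total_degree (Dj b b (R_F n [a])) = 2 * b * (2 * a - 1)"
proof (rule total_degree_eq_if_homogeneous[OF _ Dj_R_F_witness_neq_zero])
  have "homogeneous_coeffs (a - 1 + a) (R_F n [a])"
    using homogeneous_coeffs_R_F[of "[a]" n] delta0_derivs_genP_single[of a n] a n by simp
  then have "homogeneous (2 * b * (a - 1 + a)) (Dj b b (R_F n [a]))"
    by (rule homogeneous_Dj) simp
  with a show "homogeneous (2 * b * (2 * a - 1)) (Dj b b (R_F n [a]))"
    by (simp add: numeral_2_eq_2)
qed

end

definition two_column_partition :: "nat \<Rightarrow> nat list" where
  "two_column_partition n = replicate (n div 2) 2 @ (if odd n then [1] else [])"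

lemma two_column_partition:
  assumes "2 \<le> n"
  shows "two_column_partition n \<in> partitions n"
    and "conjugate (two_column_partition n) = [n - n div 2, n div 2]"
    and "hd (two_column_partition n) = 2"
proof -
  have "sorted_wrt (\<ge>) (replicate k (2::nat))" for k
    by (induction k) auto
  then show "two_column_partition n \<in> partitions n"
    unfolding partitions_def two_column_partition_def
    by (auto simp: sorted_wrt_append sum_list_replicate) presburger
  show "hd (two_column_partition n) = 2"
    using assms by (cases "n div 2") (auto simp: two_column_partition_def)
  have "Max (insert 0 (set (two_column_partition n))) = 2"
    using assms by (auto simp: two_column_partition_def intro!: Max_eqI)
  moreover have "length (filter (\<lambda>m. Suc 0 \<le> m) (two_column_partition n)) = n - n div 2"
    by (auto simp: two_column_partition_def filter_replicate) presburger+
  moreover have "length (filter (\<lambda>m. Suc (Suc 0) \<le> m) (two_column_partition n)) = n div 2"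
    by (auto simp: two_column_partition_def filter_replicate)
  ultimately show "conjugate (two_column_partition n) = [n - n div 2, n div 2]"
    unfolding conjugate_def by (simp add: upt_rec numeral_2_eq_2)
qed

lemma Dj_R_F_mem_T_mu:
  assumes "2 \<le> n"
  shows "Dj (n div 2) (n div 2) (R_F n [n - n div 2]) \<in> T_mu n (two_column_partition n)"
proof -
  have "Dj (n div 2) (n div 2) (R_F n [n - n div 2])
      = Dj (s_mu n (two_column_partition n) 1) (n div 2) (G_mu n (two_column_partition n) 1)"
    using two_column_partition(2)[OF assms] by (simp add: s_mu_def G_mu_def)
  then show ?thesis
    using assms two_column_partition(2,3)[OF assms] unfolding T_mu_def
    by (intro UnI2 CollectI exI[of _ 1] exI[of _ "n div 2"]) auto
qed

lemma two_mult_half_mult_eq: "2 * (n div 2) * (2 * (n - n div 2) - 1) = n * (n - 1)" for n :: nat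
  by (cases "even n") (auto elim!: evenE oddE simp: algebra_simps)

theorem mainTheorem7:
  fixes n :: nat
  assumes "n \<ge> 3"
  shows "d_QXY n = n * (n - 1)"
proof -
  let ?U = "\<Union>mu\<in>partitions n. T_mu n mu"
  let ?p = "Dj (n div 2) (n div 2) (R_F n [n - n div 2])"
  have p_mem: "?p \<in> ?U"
    using Dj_R_F_mem_T_mu[of n] two_column_partition(1)[of n] assms by auto
  have p_degree: "total_degree ?p = n * (n - 1)"
  proof -
    have "2 \<le> n - n div 2" "1 \<le> n div 2" "n - n div 2 + n div 2 = n"
      using assms by auto
    then have "total_degree ?p = 2 * (n div 2) * (2 * (n - n div 2) - 1)"
      by (rule total_degree_Dj_R_F_witness)
    then show ?thesis
      unfolding two_mult_half_mult_eq .
  qed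
  have degree_le: "total_degree p \<le> n * (n - 1)" if "p \<in> ?U" for p
    using that total_degree_T_mu_le[OF assms] by blast
  show ?thesis
    unfolding d_QXY_def
  proof (rule Max_eqI)
    show "finite (total_degree ` ?U)"
      using finite_partitions finite_T_mu by blast
    show "y \<le> n * (n - 1)" if "y \<in> total_degree ` ?U" for y
      using that degree_le by blast
    show "n * (n - 1) \<in> total_degree ` ?U"
      using p_mem p_degree by (metis image_eqI)
  qed
qed

end
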